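(* Every ergodic infinite permutation $\alpha$ has exactly one canonical representative.
   Context: An infinite permutation is an equivalence class of infinite real sequences $(a[n])_{n\ge 0}$ with pairwise distinct elements, under the relation $(a[n])\sim(b[n])$ iff for all $i,j$: $a[i]<a[j]\Leftrightarrow b[i]<b[j]$; any sequence in the class is a representative, and we write $\alpha[i]<\alpha[j]$ iff $a[i]<a[j]$ for a representative. A real sequence $(a[i])_{i\ge0}$ is canonical if (i) its elements are pairwise distinct, (ii) $0\le a[i]\le 1$ for all $i$, and (iii) for every $t\in[0,1]$ the ratio $\#\{0\le k<n : a[j+k]<t\}/n$ tends to $t$ as $n\to\infty$, uniformly in $j\ge 0$. An infinite permutation is ergodic if it has a canonical representative. *)

theory Defs
  imports Complex_Main
begin

definition order_equiv :: "(nat \<Rightarrow> real) \<Rightarrow> (nat \<Rightarrow> real) \<Rightarrow> bool" where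
  "order_equiv a b \<longleftrightarrow> (\<forall>i j. a i < a j \<longleftrightarrow> b i < b j)"

definition inf_perm :: "(nat \<Rightarrow> real) set \<Rightarrow> bool" where
  "inf_perm \<alpha> \<longleftrightarrow> (\<exists>a. inj a \<and> \<alpha> = {b. inj b \<and> order_equiv a b})"

definition canonical :: "(nat \<Rightarrow> real) \<Rightarrow> bool" where
  "canonical a \<longleftrightarrow> inj a \<and> (\<forall>i. 0 \<le> a i \<and> a i \<le> 1) \<and>
     (\<forall>t\<in>{0..1}. \<forall>\<epsilon>>0. \<exists>N. \<forall>n\<ge>N. \<forall>j.
        \<bar>real (card {k. k < n \<and> a (j + k) < t}) / real n - t\<bar> < \<epsilon>)"

definition ergodic :: "(nat \<Rightarrow> real) set \<Rightarrow> bool" where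
  "ergodic \<alpha> \<longleftrightarrow> inf_perm \<alpha> \<and> (\<exists>a\<in>\<alpha>. canonical a)"

end

theory Submission
  imports Defs
begin

text \<open>A canonical sequence is determined by its order type: taking the window at \<open>j = 0\<close> and
  the threshold \<open>t = a i\<close>, the value \<open>a i\<close> is the asymptotic frequency of the indices \<open>k\<close> with
  \<open>a k < a i\<close>, and that frequency depends only on the relative order of the terms.\<close>

lemma canonical_frequency_tendsto:
  assumes "canonical a" and "t \<in> {0..1}"
  shows "(\<lambda>n. real (card {k. k < n \<and> a k < t}) / real n) \<longlonglongrightarrow> t"
proof (rule LIMSEQ_I)
  fix r :: real
  assume "r > 0"
  then obtain N where "\<forall>n\<ge>N. \<forall>j. \<bar>real (card {k. k < n \<and> a (j + k) < t}) / real n - t\<bar> < r"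
    using assms unfolding canonical_def by blast
  then have "\<forall>n\<ge>N. \<bar>real (card {k. k < n \<and> a (0 + k) < t}) / real n - t\<bar> < r"
    by blast
  then show "\<exists>N. \<forall>n\<ge>N. norm (real (card {k. k < n \<and> a k < t}) / real n - t) < r"
    by auto
qed

lemma canonical_value_is_frequency_limit:
  assumes "canonical a"
  shows "(\<lambda>n. real (card {k. k < n \<and> a k < a i}) / real n) \<longlonglongrightarrow> a i"
  using assms by (intro canonical_frequency_tendsto) (auto simp: canonical_def)

lemma canonical_order_equiv_eq:
  assumes "canonical a" and "canonical b" and "order_equiv a b"
  shows "a = b"
proof
  fix i
  have "{k. k < n \<and> a k < a i} = {k. k < n \<and> b k < b i}" for n
    using assms(3) by (simp add: order_equiv_def)
  then have "(\<lambda>n. real (card {k. k < n \<and> a k < a i}) / real n) \<longlonglongrightarrow> b i"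
    using canonical_value_is_frequency_limit[OF assms(2)] by simp
  with canonical_value_is_frequency_limit[OF assms(1)] show "a i = b i"
    by (rule LIMSEQ_unique)
qed

lemma inf_perm_members_order_equiv:
  assumes "inf_perm \<alpha>" and "a \<in> \<alpha>" and "b \<in> \<alpha>"
  shows "order_equiv a b"
  using assms unfolding inf_perm_def order_equiv_def by auto

theorem mainTheorem1:
  assumes "inf_perm \<alpha>" and "ergodic \<alpha>"
  shows "\<exists>!a. a \<in> \<alpha> \<and> canonical a"
proof -
  obtain a where a: "a \<in> \<alpha>" "canonical a"
    using assms(2) unfolding ergodic_def by blast
  have "b = a" if "b \<in> \<alpha>" and "canonical b" for b
    using canonical_order_equiv_eq[OF \<open>canonical b\<close> a(2)]
      inf_perm_members_order_equiv[OF assms(1) \<open>b \<in> \<alpha>\<close> a(1)] .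
  with a show ?thesis by blast
qed

end
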